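(* Let $X=\{x_j\mid j\in J\}$ be a set, $\tilde q$ a symbol not in $X$, $V$ the $\mathbf{k}$-vector space with basis $X\cup\{\tilde q\}$, $T(V)$ its tensor algebra, $I$ the two-sided ideal generated by $\{\tilde q\otimes\tilde q-\tilde q\}\cup\{\tilde q\otimes a\otimes\tilde q-\tilde q\otimes a\mid a\in T(V)\}$, $\hat A:=T(V)/I$, $\hat q:=\tilde q+I$, $\hat 1$ the identity of $\hat A$, and $\hat x_j:=x_j+I$. Then the set $$\hat S:=\{\hat 1,\ \hat q\}\cup\{\hat x_{j_1}\cdots\hat x_{j_m},\ \hat x_{j_1}\cdots\hat x_{j_t}\hat q\,\hat x_{j_{t+1}}\cdots\hat x_{j_m}\mid j_1,\dots,j_m\in J,\ m\ge1,\ 0\le t\le m\}$$ is a $\mathbf{k}$-basis of the vector space $(\hat A,\hat q)$.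
   Context: For an associative algebra $A$ with idempotent $q$, $(A,q):=\{x\in A\mid qxq=qx\}$ is the invariant algebra induced by $q$ (here $(\hat A,\hat q)=\hat A$ is the free invariant algebra generated by $X$). The indices $j_1,\dots,j_m$ are arbitrary (repetitions allowed). *)

theory Defs
  imports Main
begin

text \<open>Letters: None stands for the extra symbol q-tilde, Some j for x_j.  The tensor algebra T(V) of the
  vector space V with basis X \<union> {q-tilde} is the free associative algebra on these
  letters: finitely supported k-valued functions on words, with concatenation
  (convolution) product.\<close>

type_synonym 'j word = "'j option list"
type_synonym ('j, 'k) fa = "'j word \<Rightarrow> 'k"

definition FA :: "('j, 'k::zero) fa set" where
  "FA = {f. finite {w. f w \<noteq> 0}}"

definition fa_add :: "('j, 'k::plus) fa \<Rightarrow> ('j, 'k) fa \<Rightarrow> ('j, 'k) fa" where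
  "fa_add f g = (\<lambda>w. f w + g w)"

definition fa_diff :: "('j, 'k::minus) fa \<Rightarrow> ('j, 'k) fa \<Rightarrow> ('j, 'k) fa" where
  "fa_diff f g = (\<lambda>w. f w - g w)"

definition fa_mult :: "('j, 'k::semiring_0) fa \<Rightarrow> ('j, 'k) fa \<Rightarrow> ('j, 'k) fa" where
  "fa_mult f g = (\<lambda>w. \<Sum>i\<le>length w. f (take i w) * g (drop i w))"

definition mono :: "'j word \<Rightarrow> ('j, 'k::{zero,one}) fa" where
  "mono w = (\<lambda>v. if v = w then 1 else 0)"

definition qt :: "('j, 'k::{zero,one}) fa" where
  "qt = mono [None]"

inductive_set ideal_gen :: "('j, 'k::comm_ring_1) fa set \<Rightarrow> ('j, 'k) fa set"
  for R :: "('j, 'k) fa set" where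
  gen: "r \<in> R \<Longrightarrow> r \<in> ideal_gen R"
| zero: "(\<lambda>w. 0) \<in> ideal_gen R"
| add: "a \<in> ideal_gen R \<Longrightarrow> b \<in> ideal_gen R \<Longrightarrow> fa_add a b \<in> ideal_gen R"
| lmult: "a \<in> FA \<Longrightarrow> b \<in> ideal_gen R \<Longrightarrow> fa_mult a b \<in> ideal_gen R"
| rmult: "a \<in> FA \<Longrightarrow> b \<in> ideal_gen R \<Longrightarrow> fa_mult b a \<in> ideal_gen R"

definition Irel :: "('j, 'k::comm_ring_1) fa set" where
  "Irel = ideal_gen ({fa_diff (fa_mult qt qt) qt}
      \<union> {fa_diff (fa_mult (fa_mult qt a) qt) (fa_mult qt a) | a. a \<in> FA})"

text \<open>f + I lies in the invariant algebra (A-hat, q-hat), i.e. q f q - q f \<in> I.\<close>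
definition in_inv :: "('j, 'k::comm_ring_1) fa \<Rightarrow> bool" where
  "in_inv f \<longleftrightarrow> f \<in> FA \<and> fa_diff (fa_mult (fa_mult qt f) qt) (fa_mult qt f) \<in> Irel"

definition S_hat :: "'j word set" where
  "S_hat = {[], [None]}
     \<union> {map Some js | js. length js \<ge> 1}
     \<union> {map Some (take t js) @ [None] @ map Some (drop t js) | js t.
          length js \<ge> 1 \<and> t \<le> length js}"

end

theory Submission
  imports Defs
begin

text \<open>Let nf w, the normal form of a word w, keep the first occurrence of q-tilde and delete
  all later ones.  The normal forms are exactly the words with at most one q-tilde, i.e. the
  elements of S-hat.  The relators q a q - q a allow deleting any q-tilde that has an earlier
  q-tilde to its left, so every word is congruent to its normal form modulo I, and S-hat spans.
  Conversely, for every h the linear functional sending f to the sum of f(w) h(nf w) vanishes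
  on I: it kills the relators because nf (q v q) = nf (q v), and its kernel is an ideal
  because nf (u nf(v)) = nf (u v) = nf (nf(u) v).  Taking h the indicator function of an element of
  S-hat extracts its coefficient, which gives linear independence.  Membership in the invariant
  algebra is automatic, since q a q - q a \<in> I for every a.\<close>

lemma mono_FA: "mono w \<in> FA"
  unfolding FA_def mono_def by (simp add: Collect_conv_if)

lemma fa_add_FA: "f \<in> FA \<Longrightarrow> g \<in> FA \<Longrightarrow> fa_add f (g :: ('j, 'k::monoid_add) fa) \<in> FA"
  unfolding FA_def fa_add_def
  by (auto intro: finite_subset[of _ "{w. f w \<noteq> 0} \<union> {w. g w \<noteq> 0}"])

lemma fa_diff_FA: "f \<in> FA \<Longrightarrow> g \<in> FA \<Longrightarrow> fa_diff f (g :: ('j, 'k::group_add) fa) \<in> FA"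
  unfolding FA_def fa_diff_def
  by (auto intro: finite_subset[of _ "{w. f w \<noteq> 0} \<union> {w. g w \<noteq> 0}"])

lemma fa_mult_FA:
  fixes a b :: "('j, 'k::semiring_0) fa"
  assumes "a \<in> FA" "b \<in> FA"
  shows "fa_mult a b \<in> FA"
proof -
  let ?T = "(\<lambda>(u, v). u @ v) ` ({u. a u \<noteq> 0} \<times> {v. b v \<noteq> 0})"
  have "{w. fa_mult a b w \<noteq> 0} \<subseteq> ?T"
  proof
    fix w assume "w \<in> {w. fa_mult a b w \<noteq> 0}"
    then obtain i where "a (take i w) \<noteq> 0" "b (drop i w) \<noteq> 0"
      unfolding fa_mult_def by (metis (mono_tags, lifting) mem_Collect_eq mult_not_zero sum.neutral)
    then show "w \<in> ?T" by (auto intro!: image_eqI[of _ _ "(take i w, drop i w)"])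
  qed
  moreover have "finite ?T" using assms by (simp add: FA_def)
  ultimately show ?thesis unfolding FA_def by (auto intro: finite_subset)
qed

lemma fa_mult_mono_left:
  "fa_mult (mono u) b w
     = (if take (length u) w = u then b (drop (length u) w) else (0 :: 'k::semiring_1))"
proof -
  have "fa_mult (mono u) b w = (\<Sum>i\<le>length w. if i = length u
      then (if take (length u) w = u then b (drop (length u) w) else 0) else 0)"
    unfolding fa_mult_def mono_def by (rule sum.cong) auto
  then show ?thesis by (auto simp: sum.delta')
qed

lemma fa_mult_mono_right:
  "fa_mult b (mono v) w
     = (if length v \<le> length w \<and> drop (length w - length v) w = v
        then b (take (length w - length v) w) else (0 :: 'k::semiring_1))"
proof -
  have "fa_mult b (mono v) w = (\<Sum>i\<le>length w. if i = length w - length v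
      then (if length v \<le> length w \<and> drop (length w - length v) w = v
            then b (take (length w - length v) w) else 0) else 0)"
    unfolding fa_mult_def mono_def by (rule sum.cong) auto
  then show ?thesis by (auto simp: sum.delta')
qed

lemma fa_mult_mono_mono: "fa_mult (mono u) (mono v) = (mono (u @ v) :: ('j, 'k::semiring_1) fa)"
proof
  fix w
  show "fa_mult (mono u) (mono v) w = (mono (u @ v) :: ('j, 'k) fa) w"
    by (simp add: fa_mult_mono_left) (metis append_eq_conv_conj mono_def)
qed

lemma fa_expand:
  fixes a :: "('j, 'k::semiring_1) fa"
  assumes "a \<in> FA"
  shows "a = (\<lambda>w. \<Sum>u | a u \<noteq> 0. a u * mono u w)"
proof
  fix w
  have "(\<Sum>u | a u \<noteq> 0. a u * mono u w) = (\<Sum>u | a u \<noteq> 0. if u = w then a u else 0)"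
    by (rule sum.cong) (auto simp: mono_def)
  with assms show "a w = (\<Sum>u | a u \<noteq> 0. a u * mono u w)" by (simp add: FA_def sum.delta)
qed

lemma fa_mult_sum_left:
  fixes b :: "('j, 'k::semiring_0) fa"
  shows "fa_mult (\<lambda>w. \<Sum>u\<in>U. c u * f u w) b = (\<lambda>w. \<Sum>u\<in>U. c u * fa_mult (f u) b w)"
  unfolding fa_mult_def
  by (rule ext) (simp add: sum_distrib_right sum_distrib_left mult.assoc sum.swap[of _ "{..length _}"])

lemma fa_mult_sum_right:
  fixes b :: "('j, 'k::comm_semiring_0) fa"
  shows "fa_mult b (\<lambda>w. \<Sum>u\<in>U. c u * f u w) = (\<lambda>w. \<Sum>u\<in>U. c u * fa_mult b (f u) w)"
  unfolding fa_mult_def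
  by (rule ext) (simp add: sum_distrib_left mult.left_commute sum.swap[of _ "{..length _}"])

lemma fa_mult_diff_left:
  "fa_mult (fa_diff a b) c = fa_diff (fa_mult a c) (fa_mult b (c :: ('j, 'k::ring) fa))"
  unfolding fa_mult_def fa_diff_def by (rule ext) (simp add: left_diff_distrib sum_subtractf)

lemma fa_mult_diff_right:
  "fa_mult c (fa_diff a b) = fa_diff (fa_mult c a) (fa_mult c (b :: ('j, 'k::ring) fa))"
  unfolding fa_mult_def fa_diff_def by (rule ext) (simp add: right_diff_distrib sum_subtractf)

definition fa_linext :: "('j word \<Rightarrow> 'k) \<Rightarrow> ('j, 'k::semiring_0) fa \<Rightarrow> 'k" where
  "fa_linext g f = (\<Sum>w | f w \<noteq> 0. f w * g w)"

lemma fa_linext_superset: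
  assumes "finite W" "{w. f w \<noteq> 0} \<subseteq> W"
  shows "fa_linext g f = (\<Sum>w\<in>W. f w * g w)"
  unfolding fa_linext_def by (rule sum.mono_neutral_left) (use assms in auto)

lemma fa_linext_zero: "fa_linext g (\<lambda>w. 0) = 0"
  by (simp add: fa_linext_def)

lemma fa_linext_mono: "fa_linext g (mono w :: ('j, 'k::semiring_1) fa) = g w"
  by (subst fa_linext_superset[of "{w}"]) (auto simp: mono_def)

lemma fa_linext_add:
  assumes "f \<in> FA" "f' \<in> FA"
  shows "fa_linext g (fa_add f f') = fa_linext g f + fa_linext g f'"
proof -
  let ?W = "{w. f w \<noteq> 0} \<union> {w. f' w \<noteq> 0}"
  have "finite ?W" using assms by (simp add: FA_def)
  then show ?thesis
    by (subst (1 2 3) fa_linext_superset[of ?W])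
       (auto simp: fa_add_def sum.distrib distrib_right)
qed

lemma fa_linext_diff:
  fixes f f' :: "('j, 'k::ring) fa"
  assumes "f \<in> FA" "f' \<in> FA"
  shows "fa_linext g (fa_diff f f') = fa_linext g f - fa_linext g f'"
proof -
  let ?W = "{w. f w \<noteq> 0} \<union> {w. f' w \<noteq> 0}"
  have "finite ?W" using assms by (simp add: FA_def)
  then show ?thesis
    by (subst (1 2 3) fa_linext_superset[of ?W])
       (auto simp: fa_diff_def sum_subtractf left_diff_distrib)
qed

lemma fa_linext_sum:
  fixes f :: "'u \<Rightarrow> ('j, 'k::comm_semiring_0) fa"
  assumes "finite U" "\<And>u. u \<in> U \<Longrightarrow> f u \<in> FA"
  shows "fa_linext g (\<lambda>w. \<Sum>u\<in>U. c u * f u w) = (\<Sum>u\<in>U. c u * fa_linext g (f u))"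
proof -
  define W where "W = (\<Union>u\<in>U. {w. f u w \<noteq> 0})"
  have W: "finite W" using assms unfolding W_def FA_def by blast
  have "{w. (\<Sum>u\<in>U. c u * f u w) \<noteq> 0} \<subseteq> W"
    unfolding W_def by clarsimp (metis (mono_tags) mult_zero_right sum.neutral)
  then have "fa_linext g (\<lambda>w. \<Sum>u\<in>U. c u * f u w) = (\<Sum>w\<in>W. (\<Sum>u\<in>U. c u * f u w) * g w)"
    by (rule fa_linext_superset[OF W])
  also have "\<dots> = (\<Sum>u\<in>U. c u * (\<Sum>w\<in>W. f u w * g w))"
    by (simp add: sum_distrib_right sum_distrib_left mult.assoc sum.swap[of _ W])
  also have "\<dots> = (\<Sum>u\<in>U. c u * fa_linext g (f u))"
    by (intro sum.cong refl arg_cong2[where f = "(*)"] fa_linext_superset[OF W, symmetric])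
       (auto simp: W_def)
  finally show ?thesis .
qed

lemma fa_linext_mult_mono_left:
  fixes b :: "('j, 'k::semiring_1) fa"
  assumes "b \<in> FA"
  shows "fa_linext g (fa_mult (mono u) b) = fa_linext (\<lambda>v. g (u @ v)) b"
proof -
  let ?S = "{v. b v \<noteq> 0}"
  have "{w. fa_mult (mono u) b w \<noteq> 0} \<subseteq> (@) u ` ?S"
  proof
    fix w assume "w \<in> {w. fa_mult (mono u) b w \<noteq> 0}"
    then have "take (length u) w = u" "b (drop (length u) w) \<noteq> 0"
      by (auto simp: fa_mult_mono_left split: if_splits)
    then show "w \<in> (@) u ` ?S"
      using append_take_drop_id[of "length u" w]
      by (intro image_eqI[where x = "drop (length u) w"]) auto
  qed
  moreover have "finite ((@) u ` ?S)" using assms by (simp add: FA_def)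
  ultimately have "fa_linext g (fa_mult (mono u) b)
      = (\<Sum>w\<in>(@) u ` ?S. fa_mult (mono u) b w * g w)"
    by (rule fa_linext_superset[rotated])
  also have "\<dots> = (\<Sum>v\<in>?S. fa_mult (mono u) b (u @ v) * g (u @ v))"
    by (subst sum.reindex) (auto simp: inj_on_def)
  also have "\<dots> = (\<Sum>v\<in>?S. b v * g (u @ v))"
    by (simp add: fa_mult_mono_left)
  finally show ?thesis by (simp add: fa_linext_def)
qed

lemma fa_linext_mult_mono_right:
  fixes b :: "('j, 'k::semiring_1) fa"
  assumes "b \<in> FA"
  shows "fa_linext g (fa_mult b (mono v)) = fa_linext (\<lambda>u. g (u @ v)) b"
proof -
  let ?S = "{u. b u \<noteq> 0}"
  have "{w. fa_mult b (mono v) w \<noteq> 0} \<subseteq> (\<lambda>u. u @ v) ` ?S"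
  proof
    fix w assume "w \<in> {w. fa_mult b (mono v) w \<noteq> 0}"
    then have "drop (length w - length v) w = v" "b (take (length w - length v) w) \<noteq> 0"
      by (auto simp: fa_mult_mono_right split: if_splits)
    then show "w \<in> (\<lambda>u. u @ v) ` ?S"
      using append_take_drop_id[of "length w - length v" w]
      by (intro image_eqI[where x = "take (length w - length v) w"]) auto
  qed
  moreover have "finite ((\<lambda>u. u @ v) ` ?S)" using assms by (simp add: FA_def)
  ultimately have "fa_linext g (fa_mult b (mono v))
      = (\<Sum>w\<in>(\<lambda>u. u @ v) ` ?S. fa_mult b (mono v) w * g w)"
    by (rule fa_linext_superset[rotated])
  also have "\<dots> = (\<Sum>u\<in>?S. fa_mult b (mono v) (u @ v) * g (u @ v))"
    by (subst sum.reindex) (auto simp: inj_on_def)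
  also have "\<dots> = (\<Sum>u\<in>?S. b u * g (u @ v))"
    by (simp add: fa_mult_mono_right)
  finally show ?thesis by (simp add: fa_linext_def)
qed

lemma fa_linext_mult_left:
  fixes a b :: "('j, 'k::comm_semiring_1) fa"
  assumes "a \<in> FA" "b \<in> FA"
  shows "fa_linext g (fa_mult a b) = (\<Sum>u | a u \<noteq> 0. a u * fa_linext (\<lambda>v. g (u @ v)) b)"
proof -
  have "fa_linext g (fa_mult a b)
      = fa_linext g (\<lambda>w. \<Sum>u | a u \<noteq> 0. a u * fa_mult (mono u) b w)"
    by (subst fa_expand[OF assms(1)], subst fa_mult_sum_left) (rule refl)
  also have "\<dots> = (\<Sum>u | a u \<noteq> 0. a u * fa_linext g (fa_mult (mono u) b))"
    using assms by (intro fa_linext_sum fa_mult_FA mono_FA) (auto simp: FA_def)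
  also have "\<dots> = (\<Sum>u | a u \<noteq> 0. a u * fa_linext (\<lambda>v. g (u @ v)) b)"
    using assms(2) by (simp add: fa_linext_mult_mono_left)
  finally show ?thesis .
qed

lemma fa_linext_mult_right:
  fixes a b :: "('j, 'k::comm_semiring_1) fa"
  assumes "a \<in> FA" "b \<in> FA"
  shows "fa_linext g (fa_mult b a) = (\<Sum>u | a u \<noteq> 0. a u * fa_linext (\<lambda>v. g (v @ u)) b)"
proof -
  have "fa_linext g (fa_mult b a)
      = fa_linext g (\<lambda>w. \<Sum>u | a u \<noteq> 0. a u * fa_mult b (mono u) w)"
    by (subst fa_expand[OF assms(1)], subst fa_mult_sum_right) (rule refl)
  also have "\<dots> = (\<Sum>u | a u \<noteq> 0. a u * fa_linext g (fa_mult b (mono u)))"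
    using assms by (intro fa_linext_sum fa_mult_FA mono_FA) (auto simp: FA_def)
  also have "\<dots> = (\<Sum>u | a u \<noteq> 0. a u * fa_linext (\<lambda>v. g (v @ u)) b)"
    using assms(2) by (simp add: fa_linext_mult_mono_right)
  finally show ?thesis .
qed

fun nf :: "'j word \<Rightarrow> 'j word" where
  "nf [] = []"
| "nf (Some j # w) = Some j # nf w"
| "nf (None # w) = None # removeAll None w"

lemma nf_append: "nf (u @ v) = nf u @ (if None \<in> set u then removeAll None v else nf v)"
  by (induction u rule: nf.induct) auto

lemma nf_eq_self_if_None_notin: "None \<notin> set w \<Longrightarrow> nf w = w"
  by (induction w rule: nf.induct) auto

lemma nf_split_first_None: "None \<notin> set u \<Longrightarrow> nf (u @ None # v) = u @ None # removeAll None v"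
  by (simp add: nf_append nf_eq_self_if_None_notin)

lemma removeAll_None_nf: "removeAll None (nf v) = removeAll None v"
  by (induction v rule: nf.induct) auto

lemma None_in_nf_iff: "None \<in> set (nf u) \<longleftrightarrow> None \<in> set u"
  by (induction u rule: nf.induct) auto

lemma nf_idem: "nf (nf v) = nf v"
  by (induction v rule: nf.induct) (auto simp: nf_eq_self_if_None_notin)

lemma nf_append_nf_right: "nf (u @ nf v) = nf (u @ v)"
  by (simp add: nf_append nf_idem removeAll_None_nf)

lemma nf_append_nf_left: "nf (nf u @ v) = nf (u @ v)"
  by (simp add: nf_append nf_idem None_in_nf_iff)

lemma ex_map_Some_iff: "(\<exists>js. u = map Some js) \<longleftrightarrow> count_list u None = 0"
  unfolding ex_map_conv count_list_0_iff by (metis not_None_eq)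

lemma S_hat_iff: "w \<in> S_hat \<longleftrightarrow> count_list w None \<le> 1"
proof
  assume "w \<in> S_hat"
  then show "count_list w None \<le> 1"
    unfolding S_hat_def by auto
next
  assume count: "count_list w None \<le> 1"
  show "w \<in> S_hat"
  proof (cases "count_list w None")
    case 0
    then obtain js where w: "w = map Some js"
      by (auto simp flip: ex_map_Some_iff)
    show ?thesis
    proof (cases "js = []")
      case False
      then have "1 \<le> length js" by (simp add: Suc_le_eq)
      with w show ?thesis unfolding S_hat_def by blast
    qed (use w in \<open>simp add: S_hat_def\<close>)
  next
    case (Suc n)
    with count have "count_list w None = Suc 0" by simp
    then obtain u v where w: "w = u @ None # v" "None \<notin> set u" "count_list v None = 0"
      by (blast dest: count_list_Suc_split_first)
    then obtain a b where "u = map Some a" "v = map Some b"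
      by (auto simp flip: ex_map_Some_iff count_list_0_iff)
    with w have w_ab:
      "w = map Some (take (length a) (a @ b)) @ [None] @ map Some (drop (length a) (a @ b))"
      by simp
    show ?thesis
    proof (cases "a @ b = []")
      case False
      then have "1 \<le> length (a @ b)" "length a \<le> length (a @ b)"
        by (simp_all add: Suc_le_eq)
      with w_ab show ?thesis unfolding S_hat_def by blast
    qed (use w_ab in \<open>simp add: S_hat_def\<close>)
  qed
qed

lemma nf_in_S_hat: "nf w \<in> S_hat"
  unfolding S_hat_iff by (induction w rule: nf.induct) auto

lemma nf_eq_self_if_S_hat: "w \<in> S_hat \<Longrightarrow> nf w = w"
  unfolding S_hat_iff by (induction w rule: nf.induct) (auto simp: count_list_0_iff)

lemma Irel_zero: "(\<lambda>w. 0) \<in> Irel"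
  unfolding Irel_def by (rule ideal_gen.zero)

lemma Irel_add: "a \<in> Irel \<Longrightarrow> b \<in> Irel \<Longrightarrow> fa_add a b \<in> Irel"
  unfolding Irel_def by (rule ideal_gen.add)

lemma Irel_mult_left: "a \<in> FA \<Longrightarrow> b \<in> Irel \<Longrightarrow> fa_mult a b \<in> Irel"
  unfolding Irel_def by (rule ideal_gen.lmult)

lemma Irel_mult_right: "a \<in> FA \<Longrightarrow> b \<in> Irel \<Longrightarrow> fa_mult b a \<in> Irel"
  unfolding Irel_def by (rule ideal_gen.rmult)

lemma Irel_relator: "a \<in> FA \<Longrightarrow> fa_diff (fa_mult (fa_mult qt a) qt) (fa_mult qt a) \<in> Irel"
  unfolding Irel_def by (rule ideal_gen.gen) blast

lemma Irel_smult:
  assumes "b \<in> Irel"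
  shows "(\<lambda>w. c * b w) \<in> Irel"
proof -
  \<comment> \<open>I is only known to be closed under products, so c enters as the constant c * 1.\<close>
  have "(\<lambda>w. c * mono [] w) \<in> FA"
    unfolding FA_def mono_def by (simp add: Collect_conv_if)
  then have "fa_mult (\<lambda>w. c * mono [] w) b \<in> Irel"
    using assms by (rule Irel_mult_left)
  moreover have "fa_mult (\<lambda>w. c * mono [] w) b = (\<lambda>w. c * b w)"
    using fa_mult_sum_left[of "\<lambda>_. c" "\<lambda>_. mono []" "{()}" b]
    by (simp add: fa_mult_mono_left)
  ultimately show ?thesis by simp
qed

lemma Irel_sum:
  assumes "finite U" "\<And>u. u \<in> U \<Longrightarrow> f u \<in> Irel"
  shows "(\<lambda>w. \<Sum>u\<in>U. c u * f u w) \<in> Irel"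
  using assms
proof (induction U rule: finite_induct)
  case empty
  then show ?case by (simp add: Irel_zero)
next
  case (insert u U)
  then have "fa_add (\<lambda>w. c u * f u w) (\<lambda>w. \<Sum>u\<in>U. c u * f u w) \<in> Irel"
    by (intro Irel_add Irel_smult) auto
  with insert.hyps show ?case by (simp add: fa_add_def)
qed

definition Irel_cong :: "('j, 'k::comm_ring_1) fa \<Rightarrow> ('j, 'k) fa \<Rightarrow> bool" where
  "Irel_cong f g \<longleftrightarrow> fa_diff f g \<in> Irel"

lemma Irel_cong_refl: "Irel_cong f f"
  using Irel_zero by (simp add: Irel_cong_def fa_diff_def)

lemma Irel_cong_trans: "Irel_cong f g \<Longrightarrow> Irel_cong g h \<Longrightarrow> Irel_cong f h"
  unfolding Irel_cong_def
  by (drule (1) Irel_add) (simp add: fa_add_def fa_diff_def)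

lemma Irel_cong_mono_context:
  assumes "Irel_cong (mono w :: ('j, 'k::comm_ring_1) fa) (mono w')"
  shows "Irel_cong (mono (u @ w @ v) :: ('j, 'k) fa) (mono (u @ w' @ v))"
proof -
  have "fa_mult (mono u) (fa_mult (fa_diff (mono w) (mono w')) (mono v))
      \<in> (Irel :: ('j, 'k) fa set)"
    using assms unfolding Irel_cong_def
    by (intro Irel_mult_left[OF mono_FA] Irel_mult_right[OF mono_FA])
  then show ?thesis
    by (simp add: Irel_cong_def fa_mult_diff_left fa_mult_diff_right fa_mult_mono_mono)
qed

lemma Irel_cong_delete_later_None:
  "Irel_cong (mono (u @ None # a @ None # b) :: ('j, 'k::comm_ring_1) fa)
     (mono (u @ None # a @ b))"
proof -
  have "Irel_cong (mono (None # a @ [None]) :: ('j, 'k) fa) (mono (None # a))"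
    using Irel_relator[OF mono_FA, of a]
    by (simp add: Irel_cong_def qt_def fa_mult_mono_mono)
  from Irel_cong_mono_context[OF this, of u b] show ?thesis
    by simp
qed

lemma Irel_cong_removeAll_None:
  "None \<in> set p \<Longrightarrow> Irel_cong (mono (p @ v)) (mono (p @ removeAll None v))"
proof (induction v arbitrary: p)
  case Nil
  then show ?case by (simp add: Irel_cong_refl)
next
  case (Cons x v)
  show ?case
  proof (cases x)
    case None
    obtain u a where "p = u @ None # a"
      using Cons.prems by (metis split_list)
    then have "Irel_cong (mono (p @ x # v)) (mono (p @ v))"
      using Irel_cong_delete_later_None[of u a v] None by simp
    with Cons show ?thesis
      using None by (auto intro: Irel_cong_trans)
  next
    case (Some j)
    then show ?thesis
      using Cons.IH[of "p @ [x]"] Cons.prems by simp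
  qed
qed

lemma Irel_cong_mono_nf: "Irel_cong (mono w) (mono (nf w))"
proof (cases "None \<in> set w")
  case True
  then obtain u v where "w = u @ None # v" "None \<notin> set u"
    by (metis split_list_first)
  then show ?thesis
    using Irel_cong_removeAll_None[of "u @ [None]" v] by (simp add: nf_split_first_None)
next
  case False
  then show ?thesis by (simp add: nf_eq_self_if_None_notin Irel_cong_refl)
qed

definition nf_kernel :: "('j, 'k::comm_ring_1) fa set" where
  "nf_kernel = {f \<in> FA. \<forall>h. fa_linext (h \<circ> nf) f = 0}"

lemma relator_in_nf_kernel:
  assumes "a \<in> FA"
  shows "fa_diff (fa_mult (fa_mult qt a) qt) (fa_mult qt a) \<in> nf_kernel"
proof -
  have "fa_linext (h \<circ> nf) (fa_mult (fa_mult qt a) qt) = fa_linext (h \<circ> nf) (fa_mult qt a)" for h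
    using assms
    by (simp add: qt_def fa_linext_mult_mono_left fa_linext_mult_mono_right fa_mult_FA mono_FA)
  with assms show ?thesis
    by (simp add: nf_kernel_def fa_linext_diff fa_diff_FA fa_mult_FA qt_def mono_FA)
qed

lemma nf_kernel_mult_left:
  assumes "a \<in> FA" "b \<in> nf_kernel"
  shows "fa_mult a b \<in> nf_kernel"
proof -
  have b: "b \<in> FA" "fa_linext (h \<circ> nf) b = 0" for h
    using assms(2) by (auto simp: nf_kernel_def)
  have shifted: "fa_linext (\<lambda>v. h (nf (u @ v))) b = 0" for h u
    using b(2)[of "\<lambda>x. h (nf (u @ x))"] by (simp add: comp_def nf_append_nf_right)
  have "fa_linext (h \<circ> nf) (fa_mult a b) = 0" for h
    using fa_linext_mult_left[OF assms(1) b(1), of "h \<circ> nf"] by (simp add: shifted)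
  with assms(1) b show ?thesis by (simp add: nf_kernel_def fa_mult_FA)
qed

lemma nf_kernel_mult_right:
  assumes "a \<in> FA" "b \<in> nf_kernel"
  shows "fa_mult b a \<in> nf_kernel"
proof -
  have b: "b \<in> FA" "fa_linext (h \<circ> nf) b = 0" for h
    using assms(2) by (auto simp: nf_kernel_def)
  have shifted: "fa_linext (\<lambda>v. h (nf (v @ u))) b = 0" for h u
    using b(2)[of "\<lambda>x. h (nf (x @ u))"] by (simp add: comp_def nf_append_nf_left)
  have "fa_linext (h \<circ> nf) (fa_mult b a) = 0" for h
    using fa_linext_mult_right[OF assms(1) b(1), of "h \<circ> nf"] by (simp add: shifted)
  with assms(1) b show ?thesis by (simp add: nf_kernel_def fa_mult_FA)
qed

lemma Irel_subset_nf_kernel: "Irel \<subseteq> nf_kernel"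
proof
  fix f
  assume "f \<in> Irel"
  then show "f \<in> nf_kernel"
    unfolding Irel_def
  proof (induction rule: ideal_gen.induct)
    case (gen r)
    have "fa_diff (fa_mult qt qt) qt \<in> nf_kernel"
      using relator_in_nf_kernel[OF mono_FA, of "[]"] by (simp add: qt_def fa_mult_mono_mono)
    with gen show ?case
      by (auto intro: relator_in_nf_kernel)
  next
    case zero
    then show ?case by (simp add: nf_kernel_def FA_def fa_linext_zero)
  next
    case (add a b)
    then show ?case by (simp add: nf_kernel_def fa_add_FA fa_linext_add)
  next
    case (lmult a b)
    then show ?case by (blast intro: nf_kernel_mult_left)
  next
    case (rmult a b)
    then show ?case by (blast intro: nf_kernel_mult_right)
  qed
qed

lemma S_hat_spans_modulo_Irel:
  fixes f :: "('j, 'k::comm_ring_1) fa"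
  assumes "f \<in> FA"
  shows "\<exists>F c. finite F \<and> F \<subseteq> S_hat \<and> fa_diff f (\<lambda>v. \<Sum>w\<in>F. c w * mono w v) \<in> Irel"
proof -
  let ?S = "{w. f w \<noteq> 0}"
  have S: "finite ?S" using assms by (simp add: FA_def)
  define c where "c y = (\<Sum>w | w \<in> ?S \<and> nf w = y. f w)" for y
  have "fa_diff f (\<lambda>v. \<Sum>y\<in>nf ` ?S. c y * mono y v)
      = (\<lambda>v. \<Sum>w\<in>?S. f w * fa_diff (mono w) (mono (nf w)) v)"
  proof
    fix v
    have "(\<Sum>w\<in>?S. f w * mono (nf w) v)
        = (\<Sum>y\<in>nf ` ?S. \<Sum>w | w \<in> ?S \<and> nf w = y. f w * mono (nf w) v)"
      by (rule sum.image_gen[OF S])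
    also have "\<dots> = (\<Sum>y\<in>nf ` ?S. c y * mono y v)"
      unfolding c_def sum_distrib_right by (intro sum.cong refl) auto
    finally have "(\<Sum>y\<in>nf ` ?S. c y * mono y v) = (\<Sum>w\<in>?S. f w * mono (nf w) v)" ..
    moreover have "f v = (\<Sum>w\<in>?S. f w * mono w v)"
      by (rule fun_cong[OF fa_expand[OF assms]])
    ultimately show "fa_diff f (\<lambda>v. \<Sum>y\<in>nf ` ?S. c y * mono y v) v
        = (\<Sum>w\<in>?S. f w * fa_diff (mono w) (mono (nf w)) v)"
      unfolding fa_diff_def by (simp add: right_diff_distrib sum_subtractf)
  qed
  moreover have "(\<lambda>v. \<Sum>w\<in>?S. f w * fa_diff (mono w) (mono (nf w)) v) \<in> Irel"
    using S Irel_cong_mono_nf unfolding Irel_cong_def by (rule Irel_sum)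
  ultimately have "fa_diff f (\<lambda>v. \<Sum>y\<in>nf ` ?S. c y * mono y v) \<in> Irel"
    by simp
  moreover have "nf ` ?S \<subseteq> S_hat"
    using nf_in_S_hat by blast
  ultimately show ?thesis
    using S by (intro exI[of _ "nf ` ?S"] exI[of _ c]) simp
qed

lemma S_hat_independent_modulo_Irel:
  fixes c :: "'j word \<Rightarrow> 'k::comm_ring_1"
  assumes "finite F" "F \<subseteq> S_hat" "(\<lambda>v. \<Sum>w\<in>F. c w * mono w v) \<in> Irel" "w0 \<in> F"
  shows "c w0 = 0"
proof -
  let ?h = "\<lambda>y. if y = w0 then 1 else 0 :: 'k"
  have "(\<lambda>v. \<Sum>w\<in>F. c w * mono w v) \<in> nf_kernel"
    using assms(3) Irel_subset_nf_kernel by blast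
  then have "0 = fa_linext (?h \<circ> nf) (\<lambda>v. \<Sum>w\<in>F. c w * mono w v)"
    by (simp add: nf_kernel_def)
  also have "\<dots> = (\<Sum>w\<in>F. c w * ?h (nf w))"
    using assms(1) by (subst fa_linext_sum) (auto simp: mono_FA fa_linext_mono)
  also have "\<dots> = (\<Sum>w\<in>F. if w = w0 then c w else 0)"
    using assms(2) by (intro sum.cong) (auto simp: nf_eq_self_if_S_hat)
  also have "\<dots> = c w0"
    using assms(1,4) by simp
  finally show ?thesis ..
qed

theorem proposition2p2:
  shows "(\<forall>w\<in>S_hat. in_inv (mono w :: ('j, 'k::field) fa))
    \<and> (\<forall>(F :: 'j word set) (c :: 'j word \<Rightarrow> 'k). finite F \<longrightarrow> F \<subseteq> S_hat \<longrightarrow>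
          (\<lambda>v. \<Sum>w\<in>F. c w * mono w v) \<in> Irel \<longrightarrow> (\<forall>w\<in>F. c w = 0))
    \<and> (\<forall>f :: ('j, 'k) fa. in_inv f \<longrightarrow>
          (\<exists>(F :: 'j word set) (c :: 'j word \<Rightarrow> 'k). finite F \<and> F \<subseteq> S_hat \<and>
             fa_diff f (\<lambda>v. \<Sum>w\<in>F. c w * mono w v) \<in> Irel))"
proof (intro conjI ballI allI impI)
  fix w :: "'j word"
  show "in_inv (mono w :: ('j, 'k) fa)"
    unfolding in_inv_def using mono_FA Irel_relator[OF mono_FA] by blast
next
  fix F and c :: "'j word \<Rightarrow> 'k" and w
  assume "finite F" "F \<subseteq> S_hat" "(\<lambda>v. \<Sum>w\<in>F. c w * mono w v) \<in> Irel" "w \<in> F"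
  then show "c w = 0" by (rule S_hat_independent_modulo_Irel)
next
  fix f :: "('j, 'k) fa"
  assume "in_inv f"
  then show "\<exists>F c. finite F \<and> F \<subseteq> S_hat \<and> fa_diff f (\<lambda>v. \<Sum>w\<in>F. c w * mono w v) \<in> Irel"
    by (intro S_hat_spans_modulo_Irel) (simp add: in_inv_def)
qed

end
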